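(* Let $\phi\in\mathrm{LTL}[\mathsf{X},\mathsf{wX},\mathsf{F},\mathsf{G}]$ and $k\in\mathbb N$. Suppose there are $A,B\subseteq\Sigma^+$ such that $\phi$ separates $A$ from $B$, and every deduction tree of $\langle A,B\rangle$ has size at least $k$. Then $\mathrm{size}(\phi)\ge k$.
   Context: Let $AP$ be a finite set of atomic propositions and $\Sigma=2^{AP}$. Formulae of $\mathrm{LTL}[\mathsf{X},\mathsf{wX},\mathsf{F},\mathsf{G}]$ are generated by $\phi::=p\mid\neg p\mid\phi\lor\phi\mid\phi\land\phi\mid\mathsf{X}\phi\mid\mathsf{wX}\phi\mid\mathsf{F}\phi\mid\mathsf{G}\phi$ ($p\in AP$), interpreted on $\sigma\in\Sigma^+$ at positions $0\le i<|\sigma|$: literals/Booleans as usual; $\mathsf{X}\phi$: $i+1<|\sigma|$ and $\phi$ at $i+1$; $\mathsf{wX}\phi$: $i+1=|\sigma|$ or $\phi$ at $i+1$; $\mathsf{F}\phi$/$\mathsf{G}\phi$: $\phi$ at some/every $j$ with $i\le j<|\sigma|$. Size: literals 1, unary operators add 1, binary connectives sum sizes plus 1. For $C\subseteq\Sigma^+$, $C\models\phi$ means $\sigma,0\models\phi$ for all $\sigma\in C$ and $C\perp\phi$ means $\sigma,0\not\models\phi$ for all $\sigma\in C$; $\phi$ separates $A$ from $B$ if $A\models\phi$ and $B\perp\phi$. Notation: $\sigma^{(j)}$ is the suffix of $\sigma$ starting at position $j$; $A^{\mathsf X}=\{\sigma^{(1)}:\sigma\in A,|\sigma|\ge2\}$;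 $A^{\mathsf G}=\{\sigma^{(j)}:\sigma\in A,0\le j<|\sigma|\}$; a future point for $A$ is $f:A\to\mathbb N$ with $f(\sigma)<|\sigma|$, and $A^f=\{\sigma^{(f(\sigma))}:\sigma\in A\}$. Proof system on terms $\langle A,B\rangle$ ($A,B\subseteq\Sigma^+$) with rules: Atomic: $\langle A,B\rangle$ if $A\models\alpha$, $B\perp\alpha$ for a literal $\alpha$; Or: $\langle A_1\uplus A_2,B\rangle$ from $\langle A_1,B\rangle,\langle A_2,B\rangle$; And: $\langle A,B_1\uplus B_2\rangle$ from $\langle A,B_1\rangle,\langle A,B_2\rangle$; Next: $\langle A,B\rangle$ from $\langle A^{\mathsf X},B^{\mathsf X}\rangle$ if $|A^{\mathsf X}|=|A|$; WeakNext: $\langle A,B\rangle$ from $\langle A^{\mathsf X},B^{\mathsf X}\rangle$ if $|B^{\mathsf X}|=|B|$; Future: $\langle A,B\rangle$ from $\langle A^f,B^{\mathsf G}\rangle$, $f$ a future point for $A$; Globally: $\langle A,B\rangle$ from $\langle A^{\mathsf G},B^f\rangle$, $f$ a future point for $B$ ($\uplus$ is disjoint union). A deduction tree for $\langle A,B\rangle$ is a finite tree of rule applications rooted at $\langle A,B\rangle$ in which every hypothesis is itself derived; its size is the number of rule applications. *)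

theory Defs
  imports Main
begin

(* Atomic propositions: a finite type 'ap (AP finite); letters Sigma = 'ap set;
   finite words = 'ap set list, Sigma^+ = nonempty lists. *)

datatype 'ap ltl =
    Prop 'ap
  | NProp 'ap
  | Or "'ap ltl" "'ap ltl"
  | And "'ap ltl" "'ap ltl"
  | Next "'ap ltl"
  | WNext "'ap ltl"
  | Fut "'ap ltl"
  | Glob "'ap ltl"

fun sat :: "'ap set list \<Rightarrow> nat \<Rightarrow> 'ap ltl \<Rightarrow> bool" where
  "sat \<sigma> i (Prop p) = (p \<in> \<sigma> ! i)"
| "sat \<sigma> i (NProp p) = (p \<notin> \<sigma> ! i)"
| "sat \<sigma> i (Or \<phi> \<psi>) = (sat \<sigma> i \<phi> \<or> sat \<sigma> i \<psi>)"
| "sat \<sigma> i (And \<phi> \<psi>) = (sat \<sigma> i \<phi> \<and> sat \<sigma> i \<psi>)"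
| "sat \<sigma> i (Next \<phi>) = (i + 1 < length \<sigma> \<and> sat \<sigma> (i + 1) \<phi>)"
| "sat \<sigma> i (WNext \<phi>) = (i + 1 = length \<sigma> \<or> sat \<sigma> (i + 1) \<phi>)"
| "sat \<sigma> i (Fut \<phi>) = (\<exists>j. i \<le> j \<and> j < length \<sigma> \<and> sat \<sigma> j \<phi>)"
| "sat \<sigma> i (Glob \<phi>) = (\<forall>j. i \<le> j \<and> j < length \<sigma> \<longrightarrow> sat \<sigma> j \<phi>)"

fun fsize :: "'ap ltl \<Rightarrow> nat" where
  "fsize (Prop p) = 1"
| "fsize (NProp p) = 1"
| "fsize (Or \<phi> \<psi>) = fsize \<phi> + fsize \<psi> + 1"
| "fsize (And \<phi> \<psi>) = fsize \<phi> + fsize \<psi> + 1"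
| "fsize (Next \<phi>) = fsize \<phi> + 1"
| "fsize (WNext \<phi>) = fsize \<phi> + 1"
| "fsize (Fut \<phi>) = fsize \<phi> + 1"
| "fsize (Glob \<phi>) = fsize \<phi> + 1"

definition models :: "'ap set list set \<Rightarrow> 'ap ltl \<Rightarrow> bool" where
  "models C \<phi> = (\<forall>\<sigma>\<in>C. sat \<sigma> 0 \<phi>)"

definition refutes :: "'ap set list set \<Rightarrow> 'ap ltl \<Rightarrow> bool" where
  "refutes C \<phi> = (\<forall>\<sigma>\<in>C. \<not> sat \<sigma> 0 \<phi>)"

definition separates :: "'ap ltl \<Rightarrow> 'ap set list set \<Rightarrow> 'ap set list set \<Rightarrow> bool" where
  "separates \<phi> A B = (models A \<phi> \<and> refutes B \<phi>)"

definition is_literal :: "'ap ltl \<Rightarrow> bool" where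
  "is_literal \<alpha> = (\<exists>p. \<alpha> = Prop p \<or> \<alpha> = NProp p)"

definition nextset :: "'ap set list set \<Rightarrow> 'ap set list set" where
  "nextset A = {drop 1 \<sigma> | \<sigma>. \<sigma> \<in> A \<and> 2 \<le> length \<sigma>}"

definition globset :: "'ap set list set \<Rightarrow> 'ap set list set" where
  "globset A = {drop j \<sigma> | \<sigma> j. \<sigma> \<in> A \<and> j < length \<sigma>}"

definition future_point :: "'ap set list set \<Rightarrow> ('ap set list \<Rightarrow> nat) \<Rightarrow> bool" where
  "future_point A f = (\<forall>\<sigma>\<in>A. f \<sigma> < length \<sigma>)"

definition fset_at :: "'ap set list set \<Rightarrow> ('ap set list \<Rightarrow> nat) \<Rightarrow> 'ap set list set" where
  "fset_at A f = {drop (f \<sigma>) \<sigma> | \<sigma>. \<sigma> \<in> A}"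

(* The side condition |A^X| = |A| of Next (resp. |B^X| = |B| of WeakNext) is read as
   "no word is lost when passing to A^X", i.e. every word of A has length >= 2. *)
inductive deduct :: "'ap set list set \<Rightarrow> 'ap set list set \<Rightarrow> nat \<Rightarrow> bool" where
  atomic: "is_literal \<alpha> \<Longrightarrow> models A \<alpha> \<Longrightarrow> refutes B \<alpha> \<Longrightarrow> deduct A B 1"
| or_rule: "deduct A1 B n1 \<Longrightarrow> deduct A2 B n2 \<Longrightarrow> A1 \<inter> A2 = {}
            \<Longrightarrow> deduct (A1 \<union> A2) B (n1 + n2 + 1)"
| and_rule: "deduct A B1 n1 \<Longrightarrow> deduct A B2 n2 \<Longrightarrow> B1 \<inter> B2 = {}
            \<Longrightarrow> deduct A (B1 \<union> B2) (n1 + n2 + 1)"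
| next_rule: "deduct (nextset A) (nextset B) n \<Longrightarrow> \<forall>\<sigma>\<in>A. 2 \<le> length \<sigma>
            \<Longrightarrow> deduct A B (n + 1)"
| wnext_rule: "deduct (nextset A) (nextset B) n \<Longrightarrow> \<forall>\<sigma>\<in>B. 2 \<le> length \<sigma>
            \<Longrightarrow> deduct A B (n + 1)"
| future_rule: "future_point A f \<Longrightarrow> deduct (fset_at A f) (globset B) n
            \<Longrightarrow> deduct A B (n + 1)"
| globally_rule: "future_point B f \<Longrightarrow> deduct (globset A) (fset_at B f) n
            \<Longrightarrow> deduct A B (n + 1)"

end

(* Each connective of a separating formula is mirrored by one rule of the proof system:
   a disjunction splits A according to which disjunct holds, a conjunction splits B,
   X and wX shift both sets by one position, and F (resp. G) chooses for each word of A
   (resp. B) a witness position, which serves as the future point.  Induction on the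
   formula therefore turns any formula separating A from B into a deduction tree for
   <A,B> with exactly size(phi) rule applications. *)

theory Submission
  imports Defs
begin

lemma sat_Fut_iff: "sat \<sigma> i (Fut \<phi>) \<longleftrightarrow> (\<exists>d. i + d < length \<sigma> \<and> sat \<sigma> (i + d) \<phi>)"
  by (auto simp: le_iff_add)

lemma sat_Glob_iff: "sat \<sigma> i (Glob \<phi>) \<longleftrightarrow> (\<forall>d. i + d < length \<sigma> \<longrightarrow> sat \<sigma> (i + d) \<phi>)"
  by (auto simp: le_iff_add)

lemma sat_drop: "j \<le> length \<sigma> \<Longrightarrow> sat (drop j \<sigma>) i \<phi> \<longleftrightarrow> sat \<sigma> (i + j) \<phi>"
proof (induction \<phi> arbitrary: i)
  case (Fut \<phi>)
  then show ?case by (simp del: sat.simps(7) add: sat_Fut_iff less_diff_conv ac_simps)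
next
  case (Glob \<phi>)
  then show ?case by (simp del: sat.simps(8) add: sat_Glob_iff less_diff_conv ac_simps)
qed (auto simp: nth_drop add.commute)

lemma sat_drop_0: "j \<le> length \<sigma> \<Longrightarrow> sat (drop j \<sigma>) 0 \<phi> \<longleftrightarrow> sat \<sigma> j \<phi>"
  using sat_drop[of j \<sigma> 0] by simp

lemma nextset_nonempty: "nextset A \<subseteq> {\<sigma>. \<sigma> \<noteq> []}"
  by (auto simp: nextset_def)

lemma globset_nonempty: "globset A \<subseteq> {\<sigma>. \<sigma> \<noteq> []}"
  by (auto simp: globset_def)

lemma fset_at_nonempty: "future_point A f \<Longrightarrow> fset_at A f \<subseteq> {\<sigma>. \<sigma> \<noteq> []}"
  by (force simp: fset_at_def future_point_def)

lemma separates_Or_split: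
  "separates (Or \<phi> \<psi>) A B \<Longrightarrow>
     separates \<phi> {\<sigma>\<in>A. sat \<sigma> 0 \<phi>} B \<and> separates \<psi> {\<sigma>\<in>A. \<not> sat \<sigma> 0 \<phi>} B"
  by (auto simp: separates_def models_def refutes_def)

lemma separates_And_split:
  "separates (And \<phi> \<psi>) A B \<Longrightarrow>
     separates \<phi> A {\<sigma>\<in>B. \<not> sat \<sigma> 0 \<phi>} \<and> separates \<psi> A {\<sigma>\<in>B. sat \<sigma> 0 \<phi>}"
  by (auto simp: separates_def models_def refutes_def)

lemma separates_Next_nextset:
  "separates (Next \<phi>) A B \<Longrightarrow>
     (\<forall>\<sigma>\<in>A. 2 \<le> length \<sigma>) \<and> separates \<phi> (nextset A) (nextset B)"
  by (auto simp: nextset_def separates_def models_def refutes_def sat_drop_0)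

(* Nonemptiness of B matters here: the empty word may refute wX phi (through the junk
   value of sat at position 1), yet it has no successor. *)
lemma separates_WNext_nextset:
  assumes "B \<subseteq> {\<sigma>. \<sigma> \<noteq> []}" and "separates (WNext \<phi>) A B"
  shows "(\<forall>\<sigma>\<in>B. 2 \<le> length \<sigma>) \<and> separates \<phi> (nextset A) (nextset B)"
proof
  show "\<forall>\<sigma>\<in>B. 2 \<le> length \<sigma>"
  proof
    fix \<sigma> assume "\<sigma> \<in> B"
    with assms have "length \<sigma> \<noteq> 0" and "length \<sigma> \<noteq> 1"
      by (auto simp: separates_def refutes_def)
    then show "2 \<le> length \<sigma>" by linarith
  qed
  then show "separates \<phi> (nextset A) (nextset B)"
    using assms(2) by (auto simp: nextset_def separates_def models_def refutes_def sat_drop_0)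
qed

lemma separates_Fut_future_point:
  assumes "separates (Fut \<phi>) A B"
  obtains f where "future_point A f" and "separates \<phi> (fset_at A f) (globset B)"
proof -
  have "\<forall>\<sigma>\<in>A. \<exists>j. j < length \<sigma> \<and> sat \<sigma> j \<phi>"
    using assms by (auto simp: separates_def models_def)
  then obtain f where f: "\<forall>\<sigma>\<in>A. f \<sigma> < length \<sigma> \<and> sat \<sigma> (f \<sigma>) \<phi>"
    by metis
  then have "models (fset_at A f) \<phi>"
    by (auto simp: models_def fset_at_def sat_drop_0)
  moreover have "refutes (globset B) \<phi>"
    using assms by (auto simp: refutes_def separates_def globset_def sat_drop_0)
  ultimately show thesis
    using f by (intro that[of f]) (simp_all add: future_point_def separates_def)
qed

lemma separates_Glob_future_point:
  assumes "separates (Glob \<phi>) A B"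
  obtains f where "future_point B f" and "separates \<phi> (globset A) (fset_at B f)"
proof -
  have "\<forall>\<sigma>\<in>B. \<exists>j. j < length \<sigma> \<and> \<not> sat \<sigma> j \<phi>"
    using assms by (auto simp: separates_def refutes_def)
  then obtain f where f: "\<forall>\<sigma>\<in>B. f \<sigma> < length \<sigma> \<and> \<not> sat \<sigma> (f \<sigma>) \<phi>"
    by metis
  then have "refutes (fset_at B f) \<phi>"
    by (auto simp: refutes_def fset_at_def sat_drop_0)
  moreover have "models (globset A) \<phi>"
    using assms by (auto simp: models_def separates_def globset_def sat_drop_0)
  ultimately show thesis
    using f by (intro that[of f]) (simp_all add: future_point_def separates_def)
qed

theorem separates_imp_deduct:
  "B \<subseteq> {\<sigma>. \<sigma> \<noteq> []} \<Longrightarrow> separates \<phi> A B \<Longrightarrow> deduct A B (fsize \<phi>)"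
proof (induction \<phi> arbitrary: A B)
  case (Prop p)
  then show ?case
    using deduct.atomic[of "Prop p" A B] by (simp add: is_literal_def separates_def)
next
  case (NProp p)
  then show ?case
    using deduct.atomic[of "NProp p" A B] by (simp add: is_literal_def separates_def)
next
  case (Or \<phi> \<psi>)
  let ?A\<^sub>1 = "{\<sigma>\<in>A. sat \<sigma> 0 \<phi>}" and ?A\<^sub>2 = "{\<sigma>\<in>A. \<not> sat \<sigma> 0 \<phi>}"
  have "separates \<phi> ?A\<^sub>1 B" and "separates \<psi> ?A\<^sub>2 B"
    using separates_Or_split[OF Or.prems(2)] by blast+
  then have "deduct (?A\<^sub>1 \<union> ?A\<^sub>2) B (fsize \<phi> + fsize \<psi> + 1)"
    by (intro deduct.or_rule Or.IH[OF Or.prems(1)]) auto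
  moreover have "?A\<^sub>1 \<union> ?A\<^sub>2 = A" by auto
  ultimately show ?case by simp
next
  case (And \<phi> \<psi>)
  let ?B\<^sub>1 = "{\<sigma>\<in>B. \<not> sat \<sigma> 0 \<phi>}" and ?B\<^sub>2 = "{\<sigma>\<in>B. sat \<sigma> 0 \<phi>}"
  have "separates \<phi> A ?B\<^sub>1" and "separates \<psi> A ?B\<^sub>2"
    using separates_And_split[OF And.prems(2)] by blast+
  moreover have "?B\<^sub>1 \<subseteq> {\<sigma>. \<sigma> \<noteq> []}" and "?B\<^sub>2 \<subseteq> {\<sigma>. \<sigma> \<noteq> []}"
    using And.prems(1) by auto
  ultimately have "deduct A (?B\<^sub>1 \<union> ?B\<^sub>2) (fsize \<phi> + fsize \<psi> + 1)"
    by (intro deduct.and_rule And.IH) auto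
  moreover have "?B\<^sub>1 \<union> ?B\<^sub>2 = B" by auto
  ultimately show ?case by simp
next
  case (Next \<phi>)
  from separates_Next_nextset[OF Next.prems(2)]
  have "deduct A B (fsize \<phi> + 1)"
    by (intro deduct.next_rule Next.IH[OF nextset_nonempty]) auto
  then show ?case by simp
next
  case (WNext \<phi>)
  from separates_WNext_nextset[OF WNext.prems]
  have "deduct A B (fsize \<phi> + 1)"
    by (intro deduct.wnext_rule WNext.IH[OF nextset_nonempty]) auto
  then show ?case by simp
next
  case (Fut \<phi>)
  obtain f where "future_point A f" and "separates \<phi> (fset_at A f) (globset B)"
    using separates_Fut_future_point[OF Fut.prems(2)] .
  then have "deduct A B (fsize \<phi> + 1)"
    by (intro deduct.future_rule Fut.IH[OF globset_nonempty])
  then show ?case by simp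
next
  case (Glob \<phi>)
  obtain f where "future_point B f" and "separates \<phi> (globset A) (fset_at B f)"
    using separates_Glob_future_point[OF Glob.prems(2)] .
  then have "deduct A B (fsize \<phi> + 1)"
    by (intro deduct.globally_rule Glob.IH[OF fset_at_nonempty])
  then show ?case by simp
qed

theorem corollary2:
  fixes \<phi> :: "('ap::finite) ltl" and k :: nat and A B :: "'ap set list set"
  assumes "A \<subseteq> {\<sigma>. \<sigma> \<noteq> []}" and "B \<subseteq> {\<sigma>. \<sigma> \<noteq> []}"
    and "separates \<phi> A B"
    and "\<forall>n. deduct A B n \<longrightarrow> k \<le> n"
  shows "k \<le> fsize \<phi>"
  using separates_imp_deduct[OF assms(2,3)] assms(4) by blast

end
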